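(* For an $E$-linear code $C$ of length $2n$: (1) $(C^{\perp_{S_L}})_{Res}=(C_{Res})^{\perp_S}=(C^{\perp_{S_L}})_{Tor}$; (2) $(C^{\perp_{S_R}})_{Res}=(C_{Tor})^{\perp_S}$ and $(C^{\perp_{S_R}})_{Tor}=\mathbb{F}_2^{2n}$; (3) $(C^{\perp_S})_{Res}=(C_{Tor})^{\perp_S}$ and $(C^{\perp_S})_{Tor}=(C_{Res})^{\perp_S}$.
   Context: $E=\langle \kappa,\tau \mid 2\kappa=2\tau=0,\ \kappa^2=\kappa,\ \tau^2=\tau,\ \kappa\tau=\kappa,\ \tau\kappa=\tau\rangle$ is the non-unital ring $\{0,\kappa,\tau,\zeta\}$, $\zeta=\kappa+\tau$, with $e\kappa=e\tau=e$, $e\zeta=0$ for all $e\in E$. Every $e\in E$ is uniquely $u\kappa+v\zeta$ ($u,v\in\mathbb{F}_2$); $\pi(u\kappa+v\zeta)=u$, componentwise. For $v\in\mathbb{F}_2^m$ and $e\in E$, $ev=(ev_1,\dots,ev_m)$ with $0\cdot e=0$, $1\cdot e=e$. An $E$-linear code of length $2n$ is a left $E$-submodule $C\subseteq E^{2n}$; $C_{Res}=\pi(C)$, $C_{Tor}=\{v\in\mathbb{F}_2^{2n}:\zeta v\in C\}$. Symplectic inner product (over $E$ or $\mathbb{F}_2$): $\langle (u|v),(u'|v')\rangle_s=\sum_i u_iv'_i+\sum_i v_iu'_i$, halves of length $n$. For binary $B$, $B^{\perp_S}=\{z\in\mathbb{F}_2^{2n}:\langle z,w\rangle_s=0\ \forall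 w\in B\}$. For $E$-linear $C$: $C^{\perp_{S_L}}=\{z\in E^{2n}:\langle z,w\rangle_s=0\ \forall w\in C\}$, $C^{\perp_{S_R}}=\{z\in E^{2n}:\langle w,z\rangle_s=0\ \forall w\in C\}$, $C^{\perp_S}=C^{\perp_{S_L}}\cap C^{\perp_{S_R}}$. *)

theory Defs
  imports Main "HOL-Library.Z2"
begin

text \<open>The non-unital ring E = {0, kappa, tau, zeta}, zeta = kappa + tau, characteristic 2,
  with e*kappa = e*tau = e and e*zeta = 0 for all e. The binary field F_2 is the type bit.\<close>

datatype Eelt = E0 | Kap | Tau | Zet

instantiation Eelt :: comm_monoid_add
begin
definition zero_Eelt :: Eelt where "zero_Eelt = E0"
fun plus_Eelt :: "Eelt \<Rightarrow> Eelt \<Rightarrow> Eelt" where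
  "plus_Eelt E0 y = y"
| "plus_Eelt x E0 = x"
| "plus_Eelt Kap Kap = E0" | "plus_Eelt Kap Tau = Zet" | "plus_Eelt Kap Zet = Tau"
| "plus_Eelt Tau Kap = Zet" | "plus_Eelt Tau Tau = E0" | "plus_Eelt Tau Zet = Kap"
| "plus_Eelt Zet Kap = Tau" | "plus_Eelt Zet Tau = Kap" | "plus_Eelt Zet Zet = E0"
instance
proof
  fix a b c :: Eelt
  show "a + b + c = a + (b + c)" by (cases a; cases b; cases c; simp)
  show "a + b = b + a" by (cases a; cases b; simp)
  show "0 + a = a" by (simp add: zero_Eelt_def)
qed
end

instantiation Eelt :: times
begin
fun times_Eelt :: "Eelt \<Rightarrow> Eelt \<Rightarrow> Eelt" where
  "times_Eelt x Kap = x"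
| "times_Eelt x Tau = x"
| "times_Eelt x Zet = E0"
| "times_Eelt x E0 = E0"
instance ..
end

lemma E_relations:
  "Kap + Kap = 0" "Tau + Tau = 0" "Kap * Kap = Kap" "Tau * Tau = Tau"
  "Kap * Tau = Kap" "Tau * Kap = Tau" "Zet = Kap + Tau"
  by (simp_all add: zero_Eelt_def)

fun Epi :: "Eelt \<Rightarrow> bit" where
  "Epi E0 = 0" | "Epi Kap = 1" | "Epi Tau = 1" | "Epi Zet = 0"

lemma Epi_decomp: "Epi ((if u = 1 then Kap else 0) + (if (v::bit) = 1 then Zet else 0)) = (u::bit)"
  by (cases u rule: bit.exhaust; cases v rule: bit.exhaust; simp add: zero_Eelt_def)

definition bsc :: "bit \<Rightarrow> Eelt \<Rightarrow> Eelt" where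
  "bsc b e = (if b = 0 then 0 else e)"

text \<open>Vectors of length 2n are lists of length 2n; halves are indices < n and n..<2n.\<close>
definition Evecs :: "nat \<Rightarrow> Eelt list set" where
  "Evecs n = {x. length x = 2 * n}"
definition Bvecs :: "nat \<Rightarrow> bit list set" where
  "Bvecs n = {x. length x = 2 * n}"

definition E_linear :: "nat \<Rightarrow> Eelt list set \<Rightarrow> bool" where
  "E_linear n C \<longleftrightarrow> C \<subseteq> Evecs n \<and> replicate (2*n) 0 \<in> C
     \<and> (\<forall>x\<in>C. \<forall>y\<in>C. map2 (+) x y \<in> C)
     \<and> (\<forall>e. \<forall>x\<in>C. map (\<lambda>c. e * c) x \<in> C)"

definition Res :: "Eelt list set \<Rightarrow> bit list set" where
  "Res C = (map Epi) ` C"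

definition Tor :: "nat \<Rightarrow> Eelt list set \<Rightarrow> bit list set" where
  "Tor n C = {v \<in> Bvecs n. map (\<lambda>b. bsc b Zet) v \<in> C}"

definition sympE :: "nat \<Rightarrow> Eelt list \<Rightarrow> Eelt list \<Rightarrow> Eelt" where
  "sympE n x y = (\<Sum>i<n. x ! i * y ! (n + i)) + (\<Sum>i<n. x ! (n + i) * y ! i)"
definition sympB :: "nat \<Rightarrow> bit list \<Rightarrow> bit list \<Rightarrow> bit" where
  "sympB n x y = (\<Sum>i<n. x ! i * y ! (n + i)) + (\<Sum>i<n. x ! (n + i) * y ! i)"

definition perpB :: "nat \<Rightarrow> bit list set \<Rightarrow> bit list set" where
  "perpB n B = {z \<in> Bvecs n. \<forall>w\<in>B. sympB n z w = 0}"
definition perpSL :: "nat \<Rightarrow> Eelt list set \<Rightarrow> Eelt list set" where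
  "perpSL n C = {z \<in> Evecs n. \<forall>w\<in>C. sympE n z w = 0}"
definition perpSR :: "nat \<Rightarrow> Eelt list set \<Rightarrow> Eelt list set" where
  "perpSR n C = {z \<in> Evecs n. \<forall>w\<in>C. sympE n w z = 0}"
definition perpS :: "nat \<Rightarrow> Eelt list set \<Rightarrow> Eelt list set" where
  "perpS n C = perpSL n C \<inter> perpSR n C"

end

theory Submission
  imports Defs
begin

text \<open>Writing \<open>e \<in> E\<close> as \<open>u \<kappa> + v \<zeta>\<close>, the map \<open>e \<mapsto> (\<pi> e, v)\<close> identifies \<open>E\<close> with
  \<open>\<bbbF>\<^sub>2 \<times> \<bbbF>\<^sub>2\<close>, the product becoming \<open>(u, v) (u', v') = (u u', v u')\<close>. Hence the symplectic
  product of \<open>z\<close> and \<open>w\<close> over \<open>E\<close> has residue \<open>\<langle>\<pi> z, \<pi> w\<rangle>\<close> and \<open>\<zeta>\<close>-coordinate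
  \<open>\<langle>v(z), \<pi> w\<rangle>\<close>. So each of the three duals is the set of vectors whose residue and
  \<open>\<zeta>\<close>-coordinates lie in two prescribed binary codes, and these two codes are its residue and
  torsion code. The prescribed codes are duals of \<open>C\<^sub>R\<^sub>e\<^sub>s\<close> or of \<open>C\<^sub>T\<^sub>o\<^sub>r\<close>; the latter enters
  because \<open>C\<^sub>T\<^sub>o\<^sub>r\<close> consists of the \<open>\<zeta>\<close>-coordinates of codewords (\<open>w + \<kappa> w = v(w) \<zeta>\<close>)
  and contains \<open>C\<^sub>R\<^sub>e\<^sub>s\<close> (\<open>\<zeta> w = \<pi>(w) \<zeta>\<close>).\<close>

fun Ezeta :: "Eelt \<Rightarrow> bit" where
  "Ezeta E0 = 0" | "Ezeta Kap = 0" | "Ezeta Tau = 1" | "Ezeta Zet = 1"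

lemma Epi_plus: "Epi (a + b) = Epi a + Epi b"
  by (cases a; cases b; simp)

lemma Ezeta_plus: "Ezeta (a + b) = Ezeta a + Ezeta b"
  by (cases a; cases b; simp)

lemma Epi_times: "Epi (a * b) = Epi a * Epi b"
  by (cases a; cases b; simp)

lemma Ezeta_times: "Ezeta (a * b) = Ezeta a * Epi b"
  by (cases a; cases b; simp)

lemma Eelt_eq_0_iff: "a = 0 \<longleftrightarrow> Epi a = 0 \<and> Ezeta a = 0"
  by (cases a; simp add: zero_Eelt_def)

lemma Epi_sum: "Epi (sum f A) = (\<Sum>x\<in>A. Epi (f x))"
  by (induction A rule: infinite_finite_induct) (simp_all add: zero_Eelt_def Epi_plus)

lemma Ezeta_sum: "Ezeta (sum f A) = (\<Sum>x\<in>A. Ezeta (f x))"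
  by (induction A rule: infinite_finite_induct) (simp_all add: zero_Eelt_def Ezeta_plus)

lemma Epi_comp_bsc_Kap [simp]: "Epi \<circ> (\<lambda>b. bsc b Kap) = id"
  and Ezeta_comp_bsc_Kap [simp]: "Ezeta \<circ> (\<lambda>b. bsc b Kap) = (\<lambda>_. 0)"
  and Epi_comp_bsc_Zet [simp]: "Epi \<circ> (\<lambda>b. bsc b Zet) = (\<lambda>_. 0)"
  and Ezeta_comp_bsc_Zet [simp]: "Ezeta \<circ> (\<lambda>b. bsc b Zet) = id"
  by (simp_all add: fun_eq_iff bsc_def zero_Eelt_def split: bit.split)

lemma Epi_sympE:
  assumes "length z = 2 * n" "length w = 2 * n"
  shows "Epi (sympE n z w) = sympB n (map Epi z) (map Epi w)"
  unfolding sympE_def sympB_def Epi_plus Epi_sum Epi_times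
  using assms by (intro arg_cong2[where f = "(+)"] sum.cong) auto

lemma Ezeta_sympE:
  assumes "length z = 2 * n" "length w = 2 * n"
  shows "Ezeta (sympE n z w) = sympB n (map Ezeta z) (map Epi w)"
  unfolding sympE_def sympB_def Ezeta_plus Ezeta_sum Ezeta_times
  using assms by (intro arg_cong2[where f = "(+)"] sum.cong) auto

lemma sympE_eq_0_iff:
  assumes "length z = 2 * n" "length w = 2 * n"
  shows "sympE n z w = 0 \<longleftrightarrow>
    sympB n (map Epi z) (map Epi w) = 0 \<and> sympB n (map Ezeta z) (map Epi w) = 0"
  using Eelt_eq_0_iff Epi_sympE[OF assms] Ezeta_sympE[OF assms] by metis

lemma sympB_commute: "sympB n x y = sympB n y x"
proof -
  have first: "(\<Sum>i<n. x ! i * y ! (n + i)) = (\<Sum>i<n. y ! (n + i) * x ! i)"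
    and second: "(\<Sum>i<n. x ! (n + i) * y ! i) = (\<Sum>i<n. y ! i * x ! (n + i))"
    by (rule sum.cong; simp add: mult.commute)+
  show ?thesis
    unfolding sympB_def first second by (rule add.commute)
qed

lemma sympE_eq_0_iff_right:
  assumes "length z = 2 * n" "length w = 2 * n"
  shows "sympE n w z = 0 \<longleftrightarrow>
    sympB n (map Epi z) (map Epi w) = 0 \<and> sympB n (map Epi z) (map Ezeta w) = 0"
  using sympE_eq_0_iff[OF assms(2,1)] sympB_commute by metis

lemma sympB_replicate_0_left: "sympB n (replicate (2 * n) 0) y = 0"
  unfolding sympB_def by simp

lemma perpB_subset_Bvecs: "perpB n B \<subseteq> Bvecs n"
  by (auto simp: perpB_def)

lemma replicate_0_in_perpB: "replicate (2 * n) 0 \<in> perpB n B"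
  by (simp add: perpB_def Bvecs_def sympB_replicate_0_left)

lemma replicate_0_in_Bvecs: "replicate (2 * n) 0 \<in> Bvecs n"
  by (simp add: Bvecs_def)

lemma perpB_antimono: "A \<subseteq> B \<Longrightarrow> perpB n B \<subseteq> perpB n A"
  by (auto simp: perpB_def)

definition Eparts :: "nat \<Rightarrow> bit list set \<Rightarrow> bit list set \<Rightarrow> Eelt list set" where
  "Eparts n A B = {z \<in> Evecs n. map Epi z \<in> A \<and> map Ezeta z \<in> B}"

lemma Eparts_Int: "Eparts n A B \<inter> Eparts n A' B' = Eparts n (A \<inter> A') (B \<inter> B')"
  by (auto simp: Eparts_def)

lemma Res_Eparts:
  assumes "A \<subseteq> Bvecs n" "replicate (2 * n) 0 \<in> B"
  shows "Res (Eparts n A B) = A"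
proof
  show "Res (Eparts n A B) \<subseteq> A"
    by (auto simp: Res_def Eparts_def)
  show "A \<subseteq> Res (Eparts n A B)"
  proof
    fix u assume "u \<in> A"
    with assms have "map (\<lambda>b. bsc b Kap) u \<in> Eparts n A B"
      by (auto simp: Eparts_def Evecs_def Bvecs_def map_replicate_const)
    then show "u \<in> Res (Eparts n A B)"
      unfolding Res_def by (rule rev_image_eqI) simp
  qed
qed

lemma Tor_Eparts:
  assumes "B \<subseteq> Bvecs n" "replicate (2 * n) 0 \<in> A"
  shows "Tor n (Eparts n A B) = B"
  using assms by (auto simp: Tor_def Eparts_def Evecs_def Bvecs_def map_replicate_const)

lemma E_linear_scale:
  "E_linear n C \<Longrightarrow> w \<in> C \<Longrightarrow> map (\<lambda>c. e * c) w \<in> C"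
  unfolding E_linear_def by blast

lemma E_linear_add:
  "E_linear n C \<Longrightarrow> w \<in> C \<Longrightarrow> w' \<in> C \<Longrightarrow> map2 (+) w w' \<in> C"
  unfolding E_linear_def by blast

lemma E_linear_length: "E_linear n C \<Longrightarrow> w \<in> C \<Longrightarrow> length w = 2 * n"
  unfolding E_linear_def Evecs_def by blast

lemma Res_subset_Tor:
  assumes "E_linear n C" shows "Res C \<subseteq> Tor n C"
proof
  fix u assume "u \<in> Res C"
  then obtain w where "w \<in> C" and u: "u = map Epi w" by (auto simp: Res_def)
  have "Zet * c = bsc (Epi c) Zet" for c
    by (cases c) (auto simp: bsc_def zero_Eelt_def)
  then have "map (\<lambda>b. bsc b Zet) u = map (\<lambda>c. Zet * c) w"
    by (simp add: u)
  with E_linear_scale[OF assms \<open>w \<in> C\<close>] have "map (\<lambda>b. bsc b Zet) u \<in> C"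
    by simp
  moreover have "length u = 2 * n"
    using E_linear_length[OF assms \<open>w \<in> C\<close>] by (simp add: u)
  ultimately show "u \<in> Tor n C"
    by (simp add: Tor_def Bvecs_def)
qed

lemma Tor_eq_image_Ezeta:
  assumes "E_linear n C" shows "Tor n C = map Ezeta ` C"
proof
  show "Tor n C \<subseteq> map Ezeta ` C"
  proof
    fix v assume "v \<in> Tor n C"
    then have "map (\<lambda>b. bsc b Zet) v \<in> C" by (simp add: Tor_def)
    then show "v \<in> map Ezeta ` C" by (rule rev_image_eqI) simp
  qed
  show "map Ezeta ` C \<subseteq> Tor n C"
  proof
    fix v assume "v \<in> map Ezeta ` C"
    then obtain w where "w \<in> C" and v: "v = map Ezeta w" by blast
    have "c + Kap * c = bsc (Ezeta c) Zet" for c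
      by (cases c) (auto simp: bsc_def zero_Eelt_def)
    then have "map (\<lambda>b. bsc b Zet) v = map2 (+) w (map (\<lambda>c. Kap * c) w)"
      by (simp add: v zip_map2 zip_same_conv_map)
    with E_linear_add[OF assms \<open>w \<in> C\<close> E_linear_scale[OF assms \<open>w \<in> C\<close>]]
    have "map (\<lambda>b. bsc b Zet) v \<in> C"
      by simp
    moreover have "length v = 2 * n"
      using E_linear_length[OF assms \<open>w \<in> C\<close>] by (simp add: v)
    ultimately show "v \<in> Tor n C"
      by (simp add: Tor_def Bvecs_def)
  qed
qed

lemma perpB_Tor_subset_perpB_Res:
  "E_linear n C \<Longrightarrow> perpB n (Tor n C) \<subseteq> perpB n (Res C)"
  by (intro perpB_antimono Res_subset_Tor)

lemma perpSL_eq_Eparts: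
  assumes "E_linear n C"
  shows "perpSL n C = Eparts n (perpB n (Res C)) (perpB n (Res C))"
  using sympE_eq_0_iff E_linear_length[OF assms]
  by (auto simp: perpSL_def Eparts_def perpB_def Res_def Evecs_def Bvecs_def)

lemma perpSR_eq_Eparts:
  assumes "E_linear n C"
  shows "perpSR n C = Eparts n (perpB n (Tor n C)) (Bvecs n)"
proof -
  have "Res C \<union> map Ezeta ` C = Tor n C"
    using Res_subset_Tor[OF assms] Tor_eq_image_Ezeta[OF assms] by blast
  moreover have "perpSR n C = Eparts n (perpB n (Res C \<union> map Ezeta ` C)) (Bvecs n)"
    using sympE_eq_0_iff_right E_linear_length[OF assms]
    by (auto simp: perpSR_def Eparts_def perpB_def Res_def Evecs_def Bvecs_def)
  ultimately show ?thesis by simp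
qed

lemma perpS_eq_Eparts:
  assumes "E_linear n C"
  shows "perpS n C = Eparts n (perpB n (Tor n C)) (perpB n (Res C))"
  using perpB_Tor_subset_perpB_Res[OF assms] perpB_subset_Bvecs
  by (simp add: perpS_def perpSL_eq_Eparts perpSR_eq_Eparts assms Eparts_Int Int_absorb1
      Int_absorb2)

theorem mainTheorem5:
  fixes n :: nat and C :: "Eelt list set"
  assumes "E_linear n C"
  shows "(Res (perpSL n C) = perpB n (Res C) \<and> perpB n (Res C) = Tor n (perpSL n C))
    \<and> (Res (perpSR n C) = perpB n (Tor n C) \<and> Tor n (perpSR n C) = Bvecs n)
    \<and> (Res (perpS n C) = perpB n (Tor n C) \<and> Tor n (perpS n C) = perpB n (Res C))"
  using assms
  by (simp add: perpSL_eq_Eparts perpSR_eq_Eparts perpS_eq_Eparts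
      Res_Eparts[OF perpB_subset_Bvecs] Tor_Eparts[OF _ replicate_0_in_perpB]
      replicate_0_in_perpB replicate_0_in_Bvecs perpB_subset_Bvecs)

end
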